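(* Let $G=\mathrm{Aut}(\mathbf{K})$ for a Fraïssé structure $\mathbf{K}$ with exhaustion $\bigcup_n\mathbf{A}_n$, and let $M\subseteq S(G)$ be a minimal subflow. Suppose $\alpha,\gamma\in S(G)$ are such that $\phi(\alpha)=\phi(\gamma)$ for every retraction $\phi:S(G)\to M$, and let $S\subseteq H_m$ be minimal. Then $S\in\alpha(m)$ if and only if $S\in\gamma(m)$.
   Context: $\mathbf{K}$ is a countably infinite ultrahomogeneous relational structure; $\mathbf{A}_1\subseteq\mathbf{A}_2\subseteq\cdots$ finite substructures, $|\mathbf{A}_n|=n$, union $\mathbf{K}$; $H_n=\mathrm{Emb}(\mathbf{A}_n,\mathbf{K})$. $S(G)$ is the inverse limit of the spaces $\beta H_n$ of ultrafilters along the continuous extensions of restriction maps $H_n\to H_m$; $\alpha(n)$ is the $n$-th coordinate. Right $G$-action: for $S\subseteq H_m$, $S\in(\alpha g)(m)$ iff $\{x\in H_n:x\circ g|_{\mathbf{A}_m}\in S\}\in\alpha(n)$ for $n$ with $g(\mathbf{A}_m)\subseteq\mathbf{A}_n$; for $f\in H_m$ set $\alpha\cdot f=(\alpha g)(m)$ for any $g\in G$ extending $f$. Semigroup product: $S\in(\alpha\gamma)(m)$ iff $\{f\in H_m:S\in\alpha\cdot f\}\in\gamma(m)$. A minimal subflow is a nonempty closed $G$-invariant set with no proper such subset; a retraction onto $M$ is a continuous $G$-equivariant $\phi:S(G)\to M$ with $\phi|_M=\mathrm{id}$. Identify subsets of $H_m$ with $2^{H_m}$, with right action $(\chi\cdot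 g)(f)=\chi(g\circ f)$; $S\subseteq H_m$ is minimal if $\overline{\chi_S\cdot G}$ is a minimal $G$-flow. *)

theory Defs
  imports "HOL-Analysis.Analysis"
begin

text \<open>The countably infinite structure K has universe nat; its relations are
  given by R :: 'r => nat list => bool (each symbol r of arity ar r). Embeddings A_m -> K are represented
  as extensional functions (undefined outside A m).\<close>

definition is_emb :: "('r \<Rightarrow> nat list \<Rightarrow> bool) \<Rightarrow> nat set \<Rightarrow> (nat \<Rightarrow> nat) \<Rightarrow> bool" where
  "is_emb R B f \<longleftrightarrow> inj_on f B \<and> (\<forall>r xs. set xs \<subseteq> B \<longrightarrow> (R r (map f xs) \<longleftrightarrow> R r xs))"

definition Hset :: "('r \<Rightarrow> nat list \<Rightarrow> bool) \<Rightarrow> (nat \<Rightarrow> nat set) \<Rightarrow> nat \<Rightarrow> (nat \<Rightarrow> nat) set" where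
  "Hset R A m = {f \<in> extensional (A m). is_emb R (A m) f}"

definition Aut :: "('r \<Rightarrow> nat list \<Rightarrow> bool) \<Rightarrow> (nat \<Rightarrow> nat) set" where
  "Aut R = {g. bij g \<and> is_emb R UNIV g}"

definition ultrahomogeneous :: "('r \<Rightarrow> nat list \<Rightarrow> bool) \<Rightarrow> bool" where
  "ultrahomogeneous R \<longleftrightarrow>
     (\<forall>B h. finite B \<and> is_emb R B h \<longrightarrow> (\<exists>g\<in>Aut R. \<forall>x\<in>B. g x = h x))"

definition ultrafilter_on :: "'a set \<Rightarrow> 'a set set \<Rightarrow> bool" where
  "ultrafilter_on X U \<longleftrightarrow> U \<subseteq> Pow X \<and> X \<in> U \<and> {} \<notin> U
     \<and> (\<forall>a b. a \<in> U \<and> b \<in> U \<longrightarrow> a \<inter> b \<in> U)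
     \<and> (\<forall>a b. a \<in> U \<and> a \<subseteq> b \<and> b \<subseteq> X \<longrightarrow> b \<in> U)
     \<and> (\<forall>a. a \<subseteq> X \<longrightarrow> a \<in> U \<or> X - a \<in> U)"

definition push :: "('a \<Rightarrow> 'b) \<Rightarrow> 'a set \<Rightarrow> 'b set \<Rightarrow> 'a set set \<Rightarrow> 'b set set" where
  "push \<rho> X Y U = {S. S \<subseteq> Y \<and> {x \<in> X. \<rho> x \<in> S} \<in> U}"

text \<open>S(G): the inverse limit of the beta H_n along restriction maps.\<close>
definition SG :: "('r \<Rightarrow> nat list \<Rightarrow> bool) \<Rightarrow> (nat \<Rightarrow> nat set) \<Rightarrow> (nat \<Rightarrow> (nat \<Rightarrow> nat) set set) set" where
  "SG R A = {\<alpha>. (\<forall>n. ultrafilter_on (Hset R A n) (\<alpha> n))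
      \<and> (\<forall>m n. m \<le> n \<longrightarrow>
           \<alpha> m = push (\<lambda>f. restrict f (A m)) (Hset R A n) (Hset R A m) (\<alpha> n))}"

definition SGtop :: "('r \<Rightarrow> nat list \<Rightarrow> bool) \<Rightarrow> (nat \<Rightarrow> nat set) \<Rightarrow> (nat \<Rightarrow> (nat \<Rightarrow> nat) set set) topology" where
  "SGtop R A = topology_generated_by
      {{\<alpha> \<in> SG R A. S \<in> \<alpha> n} | n S. S \<subseteq> Hset R A n}"

text \<open>Right action of G on S(G).\<close>
definition gact :: "('r \<Rightarrow> nat list \<Rightarrow> bool) \<Rightarrow> (nat \<Rightarrow> nat set) \<Rightarrow> (nat \<Rightarrow> (nat \<Rightarrow> nat) set set) \<Rightarrow> (nat \<Rightarrow> nat) \<Rightarrow> (nat \<Rightarrow> (nat \<Rightarrow> nat) set set)" where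
  "gact R A \<alpha> g = (\<lambda>m. let n = (LEAST n. g ` A m \<subseteq> A n) in
      {S. S \<subseteq> Hset R A m \<and> {x \<in> Hset R A n. restrict (x \<circ> g) (A m) \<in> S} \<in> \<alpha> n})"

definition minimal_flow :: "'a topology \<Rightarrow> ('a \<Rightarrow> 'g \<Rightarrow> 'a) \<Rightarrow> 'g set \<Rightarrow> 'a set \<Rightarrow> bool" where
  "minimal_flow X act Gs Y \<longleftrightarrow> Y \<noteq> {} \<and> closedin X Y \<and> (\<forall>y\<in>Y. \<forall>g\<in>Gs. act y g \<in> Y)
     \<and> (\<forall>Z. Z \<subseteq> Y \<and> Z \<noteq> {} \<and> closedin X Z \<and> (\<forall>z\<in>Z. \<forall>g\<in>Gs. act z g \<in> Z) \<longrightarrow> Z = Y)"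

definition retraction :: "('r \<Rightarrow> nat list \<Rightarrow> bool) \<Rightarrow> (nat \<Rightarrow> nat set) \<Rightarrow> (nat \<Rightarrow> (nat \<Rightarrow> nat) set set) set
    \<Rightarrow> ((nat \<Rightarrow> (nat \<Rightarrow> nat) set set) \<Rightarrow> (nat \<Rightarrow> (nat \<Rightarrow> nat) set set)) \<Rightarrow> bool" where
  "retraction R A M \<phi> \<longleftrightarrow> continuous_map (SGtop R A) (SGtop R A) \<phi> \<and> \<phi> ` SG R A \<subseteq> M
     \<and> (\<forall>\<alpha>\<in>SG R A. \<forall>g\<in>Aut R. \<phi> (gact R A \<alpha> g) = gact R A (\<phi> \<alpha>) g)
     \<and> (\<forall>\<alpha>\<in>M. \<phi> \<alpha> = \<alpha>)"

text \<open>The flow 2^{H_m} (product of discrete two-point spaces) with right action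
  (chi . g)(f) = chi(g o f).\<close>
definition cube_top :: "('r \<Rightarrow> nat list \<Rightarrow> bool) \<Rightarrow> (nat \<Rightarrow> nat set) \<Rightarrow> nat \<Rightarrow> ((nat \<Rightarrow> nat) \<Rightarrow> bool) topology" where
  "cube_top R A m = product_topology (\<lambda>_. discrete_topology (UNIV :: bool set)) (Hset R A m)"

definition chi :: "('r \<Rightarrow> nat list \<Rightarrow> bool) \<Rightarrow> (nat \<Rightarrow> nat set) \<Rightarrow> nat \<Rightarrow> (nat \<Rightarrow> nat) set \<Rightarrow> ((nat \<Rightarrow> nat) \<Rightarrow> bool)" where
  "chi R A m S = restrict (\<lambda>f. f \<in> S) (Hset R A m)"

definition cact :: "('r \<Rightarrow> nat list \<Rightarrow> bool) \<Rightarrow> (nat \<Rightarrow> nat set) \<Rightarrow> nat \<Rightarrow> ((nat \<Rightarrow> nat) \<Rightarrow> bool) \<Rightarrow> (nat \<Rightarrow> nat) \<Rightarrow> ((nat \<Rightarrow> nat) \<Rightarrow> bool)" where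
  "cact R A m c g = restrict (\<lambda>f. c (restrict (g \<circ> f) (A m))) (Hset R A m)"

definition minimal_set :: "('r \<Rightarrow> nat list \<Rightarrow> bool) \<Rightarrow> (nat \<Rightarrow> nat set) \<Rightarrow> nat \<Rightarrow> (nat \<Rightarrow> nat) set \<Rightarrow> bool" where
  "minimal_set R A m S \<longleftrightarrow> S \<subseteq> Hset R A m \<and>
     minimal_flow (cube_top R A m) (cact R A m) (Aut R)
       ((cube_top R A m) closure_of ((\<lambda>g. cact R A m (chi R A m S) g) ` Aut R))"

end

theory Submission
  imports Defs
begin

text \<open>For an idempotent \<open>u\<close> of the minimal subflow \<open>M\<close>, left multiplication by \<open>u\<close> is a
  retraction of \<open>S(G)\<close> onto \<open>M\<close>: it is continuous, equivariant and maps into \<open>M\<close>, and its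
  fixed points in \<open>M\<close> form a nonempty closed subflow, hence all of \<open>M\<close>. So \<open>u\<alpha> = u\<gamma>\<close> for
  every such \<open>u\<close>. The map \<open>\<beta> \<mapsto> {f \<in> H\<^sub>m. S \<in> \<beta> \<cdot> f}\<close> from \<open>S(G)\<close> to \<open>2^H\<^sub>m\<close> is continuous,
  equivariant and lands in the orbit closure of \<open>\<chi>\<^sub>S\<close>; as that closure is minimal, it maps \<open>M\<close>
  onto it. Hence the elements of \<open>M\<close> sent to \<open>\<chi>\<^sub>S\<close> form a nonempty closed subsemigroup, which
  by the Ellis--Numakura lemma contains an idempotent \<open>u\<close>; for this \<open>u\<close>,
  \<open>S \<in> (u\<beta>)(m) \<longleftrightarrow> S \<in> \<beta>(m)\<close> for all \<open>\<beta>\<close>.\<close>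

lemma ultrafilter_on_subset: "ultrafilter_on X U \<Longrightarrow> S \<in> U \<Longrightarrow> S \<subseteq> X"
  unfolding ultrafilter_on_def by (meson PowD subsetD)

lemma ultrafilter_on_nonempty: "ultrafilter_on X U \<Longrightarrow> S \<in> U \<Longrightarrow> S \<noteq> {}"
  unfolding ultrafilter_on_def by metis

lemma ultrafilter_on_Int: "ultrafilter_on X U \<Longrightarrow> S \<in> U \<Longrightarrow> T \<in> U \<Longrightarrow> S \<inter> T \<in> U"
  unfolding ultrafilter_on_def by metis

lemma ultrafilter_on_mono: "ultrafilter_on X U \<Longrightarrow> S \<in> U \<Longrightarrow> S \<subseteq> T \<Longrightarrow> T \<subseteq> X \<Longrightarrow> T \<in> U"
  unfolding ultrafilter_on_def by metis

lemma ultrafilter_on_top: "ultrafilter_on X U \<Longrightarrow> X \<in> U"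
  unfolding ultrafilter_on_def by metis

lemma ultrafilter_on_Diff_iff: "ultrafilter_on X U \<Longrightarrow> S \<subseteq> X \<Longrightarrow> X - S \<in> U \<longleftrightarrow> S \<notin> U"
proof -
  assume U: "ultrafilter_on X U" and S: "S \<subseteq> X"
  have "S \<inter> (X - S) = {}" by blast
  then have "\<not> (S \<in> U \<and> X - S \<in> U)"
    using ultrafilter_on_Int[OF U, of S "X - S"] ultrafilter_on_nonempty[OF U] by metis
  then show ?thesis
    using U S unfolding ultrafilter_on_def by blast
qed

lemma ultrafilter_on_Int_iff:
  "ultrafilter_on X U \<Longrightarrow> S \<subseteq> X \<Longrightarrow> T \<subseteq> X \<Longrightarrow> S \<inter> T \<in> U \<longleftrightarrow> S \<in> U \<and> T \<in> U"
  using ultrafilter_on_Int ultrafilter_on_mono[of X U "S \<inter> T"] by blast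

lemma mem_push_iff: "S \<in> push \<rho> X Y U \<longleftrightarrow> S \<subseteq> Y \<and> {x \<in> X. \<rho> x \<in> S} \<in> U"
  unfolding push_def by simp

lemma ultrafilter_onI:
  assumes "W \<subseteq> Pow Y" "Y \<in> W"
    and Int: "\<And>S T. S \<subseteq> Y \<Longrightarrow> T \<subseteq> Y \<Longrightarrow> S \<inter> T \<in> W \<longleftrightarrow> S \<in> W \<and> T \<in> W"
    and Diff: "\<And>S. S \<subseteq> Y \<Longrightarrow> Y - S \<in> W \<longleftrightarrow> S \<notin> W"
  shows "ultrafilter_on Y W"
proof -
  have "{} \<notin> W"
    using Diff[of Y] assms(2) by simp
  moreover have "T \<in> W" if "S \<in> W" "S \<subseteq> T" "T \<subseteq> Y" for S T
    using Int[of S T] that assms(1) Int_absorb2[OF that(2)] by auto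
  moreover have "S \<inter> T \<in> W" if "S \<in> W" "T \<in> W" for S T
    using Int[of S T] that assms(1) by auto
  moreover have "S \<in> W \<or> Y - S \<in> W" if "S \<subseteq> Y" for S
    using Diff[OF that] by simp
  ultimately show ?thesis
    unfolding ultrafilter_on_def using assms(1,2) by blast
qed

lemma ultrafilter_on_push:
  assumes U: "ultrafilter_on X U" and \<rho>: "\<rho> ` X \<subseteq> Y"
  shows "ultrafilter_on Y (push \<rho> X Y U)"
proof (rule ultrafilter_onI)
  have "{x \<in> X. \<rho> x \<in> Y} = X"
    using \<rho> by auto
  then show "Y \<in> push \<rho> X Y U"
    using ultrafilter_on_top[OF U] by (simp add: mem_push_iff)
  show "S \<inter> T \<in> push \<rho> X Y U \<longleftrightarrow> S \<in> push \<rho> X Y U \<and> T \<in> push \<rho> X Y U"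
    if "S \<subseteq> Y" "T \<subseteq> Y" for S T
  proof -
    have "{x \<in> X. \<rho> x \<in> S \<inter> T} = {x \<in> X. \<rho> x \<in> S} \<inter> {x \<in> X. \<rho> x \<in> T}"
      by auto
    then show ?thesis
      using that ultrafilter_on_Int_iff[OF U] by (auto simp: mem_push_iff)
  qed
  show "Y - S \<in> push \<rho> X Y U \<longleftrightarrow> S \<notin> push \<rho> X Y U" if "S \<subseteq> Y" for S
  proof -
    have "{x \<in> X. \<rho> x \<in> Y - S} = X - {x \<in> X. \<rho> x \<in> S}"
      using \<rho> by auto
    then show ?thesis
      using ultrafilter_on_Diff_iff[OF U, of "{x \<in> X. \<rho> x \<in> S}"] that by (auto simp: mem_push_iff)
  qed
qed (auto simp: mem_push_iff)

lemma push_comp: "\<rho> ` X \<subseteq> Y \<Longrightarrow> push \<sigma> Y Z (push \<rho> X Y U) = push (\<sigma> \<circ> \<rho>) X Z U"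
proof -
  assume "\<rho> ` X \<subseteq> Y"
  then have "{x \<in> X. \<rho> x \<in> {y \<in> Y. \<sigma> y \<in> S}} = {x \<in> X. (\<sigma> \<circ> \<rho>) x \<in> S}" for S
    by auto
  then show ?thesis
    unfolding push_def by auto
qed

lemma push_cong: "(\<And>x. x \<in> X \<Longrightarrow> \<rho> x = \<sigma> x) \<Longrightarrow> push \<rho> X Y U = push \<sigma> X Y U"
  unfolding push_def by (metis (no_types, lifting) Collect_cong)

lemma ultrafilter_on_limit:
  assumes U: "ultrafilter_on X U" and V: "\<And>x. x \<in> X \<Longrightarrow> ultrafilter_on Y (V x)"
  shows "ultrafilter_on Y {S. S \<subseteq> Y \<and> {x \<in> X. S \<in> V x} \<in> U}"
proof (rule ultrafilter_onI)
  have "{x \<in> X. Y \<in> V x} = X"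
    using V ultrafilter_on_top by blast
  then show "Y \<in> {S. S \<subseteq> Y \<and> {x \<in> X. S \<in> V x} \<in> U}"
    using ultrafilter_on_top[OF U] by simp
  show "S \<inter> T \<in> {S. S \<subseteq> Y \<and> {x \<in> X. S \<in> V x} \<in> U} \<longleftrightarrow>
      S \<in> {S. S \<subseteq> Y \<and> {x \<in> X. S \<in> V x} \<in> U} \<and> T \<in> {S. S \<subseteq> Y \<and> {x \<in> X. S \<in> V x} \<in> U}"
    if "S \<subseteq> Y" "T \<subseteq> Y" for S T
  proof -
    have "{x \<in> X. S \<inter> T \<in> V x} = {x \<in> X. S \<in> V x} \<inter> {x \<in> X. T \<in> V x}"
      using that V ultrafilter_on_Int_iff by blast
    then show ?thesis
      using that ultrafilter_on_Int_iff[OF U] by auto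
  qed
  show "Y - S \<in> {S. S \<subseteq> Y \<and> {x \<in> X. S \<in> V x} \<in> U} \<longleftrightarrow> S \<notin> {S. S \<subseteq> Y \<and> {x \<in> X. S \<in> V x} \<in> U}"
    if "S \<subseteq> Y" for S
  proof -
    have "{x \<in> X. Y - S \<in> V x} = X - {x \<in> X. S \<in> V x}"
      using that V ultrafilter_on_Diff_iff by blast
    then show ?thesis
      using that ultrafilter_on_Diff_iff[OF U, of "{x \<in> X. S \<in> V x}"] by auto
  qed
qed auto

lemma ultrafilter_on_finite_Ball:
  assumes U: "ultrafilter_on X U" and "finite F" and "\<And>f. f \<in> F \<Longrightarrow> {x \<in> X. P f x} \<in> U"
  shows "{x \<in> X. \<forall>f\<in>F. P f x} \<in> U"
  using assms(2,3)
proof (induction F rule: finite_induct)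
  case empty
  then show ?case using ultrafilter_on_top[OF U] by simp
next
  case (insert f F)
  have "{x \<in> X. \<forall>g\<in>insert f F. P g x} = {x \<in> X. P f x} \<inter> {x \<in> X. \<forall>g\<in>F. P g x}"
    by auto
  then show ?case
    using insert ultrafilter_on_Int[OF U] by simp
qed

lemma compact_space_Inter_chain_nonempty:
  assumes X: "compact_space X" and "\<C> \<noteq> {}"
    and closed: "\<And>C. C \<in> \<C> \<Longrightarrow> closedin X C \<and> C \<noteq> {}"
    and chain: "\<And>C D. C \<in> \<C> \<Longrightarrow> D \<in> \<C> \<Longrightarrow> C \<subseteq> D \<or> D \<subseteq> C"
  shows "\<Inter>\<C> \<noteq> {}"
proof -
  have fip: "\<Inter>\<F> \<noteq> {}" if "finite \<F>" "\<F> \<subseteq> \<C>" for \<F>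
  proof (cases "\<F> = {}")
    case False
    have "subset.chain \<C> \<F>"
      using that chain unfolding subset_chain_def by blast
    then have "\<Inter>\<F> \<in> \<F>"
      by (rule Inter_in_chain[OF \<open>finite \<F>\<close> False])
    then show ?thesis
      using closed that(2) by blast
  qed simp
  show ?thesis
    by (rule compact_space_fip[THEN iffD1, OF X, rule_format]) (use closed fip in auto)
qed

definition closed_subsemigroup :: "'a topology \<Rightarrow> ('a \<Rightarrow> 'a \<Rightarrow> 'a) \<Rightarrow> 'a set \<Rightarrow> bool" where
  "closed_subsemigroup X mul K \<longleftrightarrow>
     K \<noteq> {} \<and> closedin X K \<and> (\<forall>x\<in>K. \<forall>y\<in>K. mul x y \<in> K)"

lemma exists_minimal_closed_subsemigroup:
  assumes X: "compact_space X" and K: "closed_subsemigroup X mul K"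
  obtains B where "closed_subsemigroup X mul B" "B \<subseteq> K"
    "\<And>B'. closed_subsemigroup X mul B' \<Longrightarrow> B' \<subseteq> B \<Longrightarrow> B' = B"
proof -
  define \<F> where "\<F> = {B. closed_subsemigroup X mul B \<and> B \<subseteq> K}"
  have po: "partial_order_on \<F> (relation_of (\<lambda>B C. C \<subseteq> B) \<F>)"
    unfolding partial_order_on_def preorder_on_def refl_on_def trans_def antisym_def relation_of_def
    by auto
  have "\<exists>B\<in>\<F>. \<forall>C\<in>\<C>. B \<subseteq> C" if \<C>: "\<C> \<in> Chains (relation_of (\<lambda>B C. C \<subseteq> B) \<F>)" for \<C>
  proof (cases "\<C> = {}")
    case True
    then show ?thesis
      using K unfolding \<F>_def by auto
  next
    case False
    have \<C>\<F>: "\<C> \<subseteq> \<F>"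
      using \<C> unfolding Chains_def relation_of_def by auto
    then have members: "\<And>C. C \<in> \<C> \<Longrightarrow> closedin X C \<and> C \<noteq> {} \<and> C \<subseteq> K \<and> (\<forall>x\<in>C. \<forall>y\<in>C. mul x y \<in> C)"
      unfolding \<F>_def closed_subsemigroup_def by auto
    have "\<Inter>\<C> \<noteq> {}"
    proof (rule compact_space_Inter_chain_nonempty[OF X False])
      show "\<And>C D. C \<in> \<C> \<Longrightarrow> D \<in> \<C> \<Longrightarrow> C \<subseteq> D \<or> D \<subseteq> C"
        using \<C> unfolding Chains_def relation_of_def by auto
    qed (simp add: members)
    moreover have "closedin X (\<Inter>\<C>)"
      using members False by (intro closedin_Inter) auto
    moreover have "\<Inter>\<C> \<subseteq> K"
      using members False by (meson Inf_lower2 ex_in_conv)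
    moreover have "\<forall>x\<in>\<Inter>\<C>. \<forall>y\<in>\<Inter>\<C>. mul x y \<in> \<Inter>\<C>"
      using members by (simp add: Ball_def)
    ultimately have "\<Inter>\<C> \<in> \<F>"
      unfolding \<F>_def closed_subsemigroup_def by simp
    then show ?thesis
      by (intro bexI[of _ "\<Inter>\<C>"]) auto
  qed
  then obtain B where "B \<in> \<F>" "\<forall>C\<in>\<F>. B \<supseteq> C \<longrightarrow> C = B"
    using predicate_Zorn[OF po] by auto
  then show ?thesis
    by (intro that[of B]) (auto simp: \<F>_def)
qed

lemma closed_subsemigroup_left_translate:
  assumes X: "compact_space X" "Hausdorff_space X" and B: "closed_subsemigroup X mul B" and a: "a \<in> B"
    and assoc: "\<And>x y z. x \<in> B \<Longrightarrow> y \<in> B \<Longrightarrow> z \<in> B \<Longrightarrow> mul (mul x y) z = mul x (mul y z)"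
    and cont: "continuous_map X X (mul a)"
  shows "closed_subsemigroup X mul (mul a ` B)"
  unfolding closed_subsemigroup_def
proof (intro conjI ballI)
  show "mul a ` B \<noteq> {}"
    using a by blast
  show "closedin X (mul a ` B)"
  proof -
    have "compactin X B"
      using B closedin_compact_space[OF X(1)] unfolding closed_subsemigroup_def by blast
    then show ?thesis
      by (rule compactin_imp_closedin[OF X(2) image_compactin[OF _ cont]])
  qed
next
  fix x y
  assume "x \<in> mul a ` B" "y \<in> mul a ` B"
  then obtain x' y' where xy: "x' \<in> B" "y' \<in> B" "x = mul a x'" "y = mul a y'"
    by blast
  have Bmul: "\<And>x y. x \<in> B \<Longrightarrow> y \<in> B \<Longrightarrow> mul x y \<in> B"
    using B unfolding closed_subsemigroup_def by blast
  have "mul x y = mul a (mul x' (mul a y'))"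
    unfolding xy(3,4) using a xy(1,2) Bmul by (intro assoc) auto
  moreover have "mul x' (mul a y') \<in> B"
    using a xy(1,2) Bmul by blast
  ultimately show "mul x y \<in> mul a ` B"
    by blast
qed

lemma closed_subsemigroup_right_identities:
  assumes X: "Hausdorff_space X" and B: "closed_subsemigroup X mul B" and a: "a \<in> B"
    and assoc: "\<And>x y z. x \<in> B \<Longrightarrow> y \<in> B \<Longrightarrow> z \<in> B \<Longrightarrow> mul (mul x y) z = mul x (mul y z)"
    and cont: "continuous_map X X (mul a)" and nonempty: "\<exists>x\<in>B. mul a x = a"
  shows "closed_subsemigroup X mul {x \<in> B. mul a x = a}"
  unfolding closed_subsemigroup_def
proof (intro conjI ballI)
  have Bc: "closedin X B"
    using B unfolding closed_subsemigroup_def by blast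
  have "closedin X {x \<in> topspace X. mul a x \<in> {a}}"
    using a closedin_subset[OF Bc]
    by (intro closedin_continuous_map_preimage[OF cont closedin_Hausdorff_singleton[OF X]]) auto
  moreover have "{x \<in> B. mul a x = a} = B \<inter> {x \<in> topspace X. mul a x \<in> {a}}"
    using closedin_subset[OF Bc] by auto
  ultimately show "closedin X {x \<in> B. mul a x = a}"
    using Bc by (simp add: closedin_Int)
next
  fix x y
  assume "x \<in> {x \<in> B. mul a x = a}" "y \<in> {x \<in> B. mul a x = a}"
  moreover from this have "mul a (mul x y) = mul (mul a x) y"
    using a by (intro assoc[symmetric]) auto
  ultimately show "mul x y \<in> {x \<in> B. mul a x = a}"
    using B unfolding closed_subsemigroup_def by simp
qed (use nonempty in blast)

lemma Ellis_Numakura: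
  assumes X: "compact_space X" "Hausdorff_space X" and K: "closed_subsemigroup X mul K"
    and assoc: "\<And>x y z. x \<in> K \<Longrightarrow> y \<in> K \<Longrightarrow> z \<in> K \<Longrightarrow> mul (mul x y) z = mul x (mul y z)"
    and cont: "\<And>x. x \<in> K \<Longrightarrow> continuous_map X X (mul x)"
  obtains u where "u \<in> K" "mul u u = u"
proof -
  obtain B where B: "closed_subsemigroup X mul B" "B \<subseteq> K"
    and minimal: "\<And>B'. closed_subsemigroup X mul B' \<Longrightarrow> B' \<subseteq> B \<Longrightarrow> B' = B"
    using exists_minimal_closed_subsemigroup[OF X(1) K] by blast
  then obtain a where a: "a \<in> B"
    unfolding closed_subsemigroup_def by blast
  have assoc_B: "mul (mul x y) z = mul x (mul y z)" if "x \<in> B" "y \<in> B" "z \<in> B" for x y z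
    using that B(2) by (intro assoc) auto
  have cont_a: "continuous_map X X (mul a)"
    using a B(2) by (intro cont) auto
  have "closed_subsemigroup X mul (mul a ` B)"
    by (rule closed_subsemigroup_left_translate[OF X B(1) a assoc_B cont_a])
  moreover have "mul a ` B \<subseteq> B"
    using a B(1) unfolding closed_subsemigroup_def by blast
  ultimately have "mul a ` B = B"
    by (rule minimal)
  then have "a \<in> mul a ` B"
    using a by simp
  then have "\<exists>x\<in>B. mul a x = a"
    by (metis imageE)
  then have "{x \<in> B. mul a x = a} = B"
    by (intro minimal closed_subsemigroup_right_identities[OF X(2) B(1) a assoc_B cont_a]) auto
  then show ?thesis
    using that[of a] a B(2) by auto
qed

abbreviation Cantor_cube :: "('i \<Rightarrow> bool) topology" where
  "Cantor_cube \<equiv> product_topology (\<lambda>_. discrete_topology UNIV) UNIV"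

lemma clopen_Cantor_cube_coordinate:
  "openin Cantor_cube {p. p i = b}" "closedin Cantor_cube {p. p i = b}"
proof -
  have proj: "continuous_map Cantor_cube (discrete_topology UNIV) (\<lambda>p. p i)"
    by (rule continuous_map_product_projection) simp
  show "openin Cantor_cube {p. p i = b}"
    using openin_continuous_map_preimage[OF proj, of "{b}"] by simp
  show "closedin Cantor_cube {p. p i = b}"
    using closedin_continuous_map_preimage[OF proj, of "{b}"] by simp
qed

lemma closedin_Cantor_cube_three_coordinates:
  "closedin Cantor_cube {p. Q (p i) (p j) (p k)}"
proof -
  have "{p. Q (p i) (p j) (p k)} =
      (\<Union>(a, b, c)\<in>{t. case t of (a, b, c) \<Rightarrow> Q a b c}. {p. p i = a} \<inter> {p. p j = b} \<inter> {p. p k = c})"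
    by auto
  moreover have "finite {t :: bool \<times> bool \<times> bool. case t of (a, b, c) \<Rightarrow> Q a b c}"
    by simp
  ultimately show ?thesis
    by (auto intro!: closedin_Union clopen_Cantor_cube_coordinate)
qed

lemma closedin_Collect_conj: "closedin X {p. P p} \<Longrightarrow> closedin X {p. Q p} \<Longrightarrow> closedin X {p. P p \<and> Q p}"
  by (simp add: Collect_conj_eq closedin_Int)

lemma closedin_Collect_all: "(\<And>i. closedin X {p. Q i p}) \<Longrightarrow> closedin X {p. \<forall>i. Q i p}"
  using closedin_Inter[of "range (\<lambda>i. {p. Q i p})" X] by (simp add: Collect_all_eq) blast

lemma continuous_map_to_discrete_bool:
  assumes "openin X {x \<in> topspace X. f x}" and "openin X {x \<in> topspace X. \<not> f x}"
  shows "continuous_map X (discrete_topology UNIV) f"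
  unfolding continuous_map_def
proof (intro conjI allI impI)
  fix U :: "bool set"
  have "{x \<in> topspace X. f x \<in> U} =
      (if True \<in> U then {x \<in> topspace X. f x} else {}) \<union> (if False \<in> U then {x \<in> topspace X. \<not> f x} else {})"
    by (auto; metis (full_types))
  then show "openin X {x \<in> topspace X. f x \<in> U}"
    using assms by auto
qed simp

lemma is_emb_subset: "is_emb R B f \<Longrightarrow> C \<subseteq> B \<Longrightarrow> is_emb R C f"
  unfolding is_emb_def using inj_on_subset by (metis subset_trans)

lemma is_emb_comp:
  assumes f: "is_emb R B f" and g: "is_emb R C g" and fg: "f ` B \<subseteq> C"
  shows "is_emb R B (g \<circ> f)"
proof -
  have "inj_on (g \<circ> f) B"
    using f g fg unfolding is_emb_def by (meson comp_inj_on inj_on_subset)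
  moreover have "R r (map (g \<circ> f) xs) \<longleftrightarrow> R r xs" if xs: "set xs \<subseteq> B" for r xs
  proof -
    have "set (map f xs) \<subseteq> C"
      using xs fg by auto
    then have "R r (map g (map f xs)) \<longleftrightarrow> R r (map f xs)"
      using g unfolding is_emb_def by blast
    also have "\<dots> \<longleftrightarrow> R r xs"
      using f xs unfolding is_emb_def by blast
    finally show ?thesis
      by simp
  qed
  ultimately show ?thesis
    unfolding is_emb_def by blast
qed

lemma is_emb_cong: "is_emb R B f \<Longrightarrow> (\<And>x. x \<in> B \<Longrightarrow> f x = f' x) \<Longrightarrow> is_emb R B f'"
proof -
  assume f: "is_emb R B f" and eq: "\<And>x. x \<in> B \<Longrightarrow> f x = f' x"
  then have "inj_on f' B"
    unfolding is_emb_def using inj_on_cong by blast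
  moreover have "set xs \<subseteq> B \<Longrightarrow> map f' xs = map f xs" for xs
    using eq by (simp add: subset_iff)
  ultimately show ?thesis
    using f unfolding is_emb_def by metis
qed

lemma Aut_is_emb: "g \<in> Aut R \<Longrightarrow> is_emb R B g"
  unfolding Aut_def using is_emb_subset by blast

lemma id_in_Aut: "id \<in> Aut R"
  unfolding Aut_def is_emb_def by auto

lemma minimal_flowD:
  assumes "minimal_flow X act Gs Y"
  shows "Y \<noteq> {}" "closedin X Y" "\<And>y g. y \<in> Y \<Longrightarrow> g \<in> Gs \<Longrightarrow> act y g \<in> Y"
    and "\<And>Z. Z \<subseteq> Y \<Longrightarrow> Z \<noteq> {} \<Longrightarrow> closedin X Z \<Longrightarrow> (\<And>z g. z \<in> Z \<Longrightarrow> g \<in> Gs \<Longrightarrow> act z g \<in> Z)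
      \<Longrightarrow> Z = Y"
proof -
  show "Y \<noteq> {}" "closedin X Y" "\<And>y g. y \<in> Y \<Longrightarrow> g \<in> Gs \<Longrightarrow> act y g \<in> Y"
    using assms unfolding minimal_flow_def by auto
next
  fix Z
  assume "Z \<subseteq> Y" "Z \<noteq> {}" "closedin X Z" "\<And>z g. z \<in> Z \<Longrightarrow> g \<in> Gs \<Longrightarrow> act z g \<in> Z"
  then show "Z = Y"
    using assms unfolding minimal_flow_def by (simp add: Ball_def)
qed

text \<open>Points of the Cantor cube indexed by pairs \<open>(n, S)\<close> are read as sequences of families of sets;
  \<open>S(G)\<close> is the image of a closed subset of the cube, hence compact.\<close>

definition family_of :: "(nat \<times> 'a set \<Rightarrow> bool) \<Rightarrow> nat \<Rightarrow> 'a set set" where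
  "family_of p = (\<lambda>n. {S. p (n, S)})"

lemma Collect_mem_Collect_comp:
  "(\<And>y. y \<in> X \<Longrightarrow> g y \<in> Y) \<Longrightarrow> (\<And>y. y \<in> X \<Longrightarrow> h (g y) = k y) \<Longrightarrow>
    {y \<in> X. g y \<in> {x \<in> Y. h x \<in> S}} = {y \<in> X. k y \<in> S}"
  by auto

locale fraisse_exhaustion =
  fixes R :: "'r \<Rightarrow> nat list \<Rightarrow> bool" and A :: "nat \<Rightarrow> nat set"
  assumes ultrahomogeneous: "ultrahomogeneous R"
    and A_Suc: "\<And>n. A n \<subseteq> A (Suc n)"
    and finite_A: "\<And>n. finite (A n)"
    and Union_A: "(\<Union>n. A n) = UNIV"
begin

abbreviation H where "H \<equiv> Hset R A"

lemma A_mono: "m \<le> n \<Longrightarrow> A m \<subseteq> A n"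
  using lift_Suc_mono_le[of A, OF A_Suc] by blast

lemma finite_subset_A: "finite B \<Longrightarrow> \<exists>n. B \<subseteq> A n"
proof (induction B rule: finite_induct)
  case (insert x B)
  then obtain n where "B \<subseteq> A n"
    by auto
  moreover obtain k where "x \<in> A k"
    using Union_A by blast
  ultimately have "insert x B \<subseteq> A (max n k)"
    using A_mono[of n "max n k"] A_mono[of k "max n k"] by auto
  then show ?case
    by blast
qed simp

lemma Hset_iff: "f \<in> H m \<longleftrightarrow> f \<in> extensional (A m) \<and> is_emb R (A m) f"
  by (simp add: Hset_def)

lemma restrict_in_Hset: "is_emb R (A m) f \<Longrightarrow> restrict f (A m) \<in> H m"
  unfolding Hset_iff by (auto intro: is_emb_cong)

lemma restrict_Hset_in_Hset: "x \<in> H n \<Longrightarrow> m \<le> n \<Longrightarrow> restrict x (A m) \<in> H m"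
  using restrict_in_Hset is_emb_subset A_mono Hset_iff by metis

lemma restrict_comp_in_Hset:
  "x \<in> H n \<Longrightarrow> is_emb R (A m) f \<Longrightarrow> f ` A m \<subseteq> A n \<Longrightarrow> restrict (x \<circ> f) (A m) \<in> H m"
  using restrict_in_Hset is_emb_comp Hset_iff by metis

lemma restrict_Aut_comp_in_Hset: "g \<in> Aut R \<Longrightarrow> f \<in> H m \<Longrightarrow> restrict (g \<circ> f) (A m) \<in> H m"
  using restrict_in_Hset is_emb_comp Hset_iff Aut_is_emb by (metis subset_UNIV)

lemma restrict_Hset: "f \<in> H m \<Longrightarrow> restrict f (A m) = f"
  using Hset_iff by (simp add: extensional_restrict)

lemma finite_image_subset_A: "finite F \<Longrightarrow> \<exists>n. \<forall>f\<in>F. f ` A m \<subseteq> A n"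
proof -
  assume "finite F"
  then have "finite (\<Union>f\<in>F. f ` A m)"
    using finite_A by blast
  then obtain n where "(\<Union>f\<in>F. f ` A m) \<subseteq> A n"
    using finite_subset_A by blast
  then show ?thesis
    by blast
qed

lemma image_subset_A: "\<exists>n. f ` A m \<subseteq> A n"
  using finite_image_subset_A[of "{f}"] by simp

lemma Hset_extends_to_Aut: "f \<in> H n \<Longrightarrow> \<exists>g\<in>Aut R. \<forall>x\<in>A n. g x = f x"
  using ultrahomogeneous finite_A unfolding ultrahomogeneous_def Hset_iff by blast

lemma SG_ultrafilter: "\<beta> \<in> SG R A \<Longrightarrow> ultrafilter_on (H n) (\<beta> n)"
  unfolding SG_def by blast

lemma SG_mem_iff_pullback:
  assumes "\<beta> \<in> SG R A" and "m \<le> n"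
  shows "T \<in> \<beta> m \<longleftrightarrow> T \<subseteq> H m \<and> {x \<in> H n. restrict x (A m) \<in> T} \<in> \<beta> n"
proof -
  have "\<beta> m = push (\<lambda>f. restrict f (A m)) (H n) (H m) (\<beta> n)"
    using assms unfolding SG_def by blast
  then show ?thesis
    by (simp add: mem_push_iff)
qed

text \<open>The paper's \<open>\<beta> \<cdot> f\<close>, computed at the least level \<open>n\<close> with \<open>f ` A m \<subseteq> A n\<close>;
  by \<open>dot_eq_level\<close> any larger level gives the same ultrafilter.\<close>

definition dot :: "(nat \<Rightarrow> (nat \<Rightarrow> nat) set set) \<Rightarrow> nat \<Rightarrow> (nat \<Rightarrow> nat) \<Rightarrow> (nat \<Rightarrow> nat) set set" where
  "dot \<beta> m f = (let n = (LEAST n. f ` A m \<subseteq> A n) in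
      {S. S \<subseteq> H m \<and> {x \<in> H n. restrict (x \<circ> f) (A m) \<in> S} \<in> \<beta> n})"

lemma gact_eq_dot: "gact R A \<beta> g = (\<lambda>m. dot \<beta> m g)"
  unfolding gact_def dot_def by simp

lemma restrict_restrict_comp:
  "f ` A m \<subseteq> A n \<Longrightarrow> restrict (restrict y (A n) \<circ> f) (A m) = restrict (y \<circ> f) (A m)"
  by (intro restrict_ext) auto

lemma dot_eq_level:
  assumes \<beta>: "\<beta> \<in> SG R A" and f: "f ` A m \<subseteq> A n"
  shows "dot \<beta> m f = {S. S \<subseteq> H m \<and> {x \<in> H n. restrict (x \<circ> f) (A m) \<in> S} \<in> \<beta> n}"
proof -
  define L where "L = (LEAST n. f ` A m \<subseteq> A n)"
  have L: "f ` A m \<subseteq> A L" "L \<le> n"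
    unfolding L_def by (rule LeastI[where P="\<lambda>n. f ` A m \<subseteq> A n", OF f],
        rule Least_le[where P="\<lambda>n. f ` A m \<subseteq> A n", OF f])
  have "{x \<in> H L. restrict (x \<circ> f) (A m) \<in> S} \<in> \<beta> L \<longleftrightarrow> {x \<in> H n. restrict (x \<circ> f) (A m) \<in> S} \<in> \<beta> n"
    for S
  proof -
    have "{y \<in> H n. restrict y (A L) \<in> {x \<in> H L. restrict (x \<circ> f) (A m) \<in> S}} =
        {x \<in> H n. restrict (x \<circ> f) (A m) \<in> S}"
      by (rule Collect_mem_Collect_comp) (simp_all only: restrict_Hset_in_Hset[OF _ L(2)] restrict_restrict_comp[OF L(1)])
    then show ?thesis
      using SG_mem_iff_pullback[OF \<beta> L(2), of "{x \<in> H L. restrict (x \<circ> f) (A m) \<in> S}"] by auto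
  qed
  then show ?thesis
    unfolding dot_def L_def[symmetric] Let_def by auto
qed

lemma mem_dot_iff:
  "\<beta> \<in> SG R A \<Longrightarrow> f ` A m \<subseteq> A n \<Longrightarrow>
    S \<in> dot \<beta> m f \<longleftrightarrow> S \<subseteq> H m \<and> {x \<in> H n. restrict (x \<circ> f) (A m) \<in> S} \<in> \<beta> n"
  using dot_eq_level by blast

lemma dot_eq_push:
  "\<beta> \<in> SG R A \<Longrightarrow> f ` A m \<subseteq> A n \<Longrightarrow>
    dot \<beta> m f = push (\<lambda>x. restrict (x \<circ> f) (A m)) (H n) (H m) (\<beta> n)"
  unfolding push_def by (rule dot_eq_level)

lemma dot_cong: "(\<And>x. x \<in> A m \<Longrightarrow> f x = f' x) \<Longrightarrow> dot \<beta> m f = dot \<beta> m f'"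
proof -
  assume eq: "\<And>x. x \<in> A m \<Longrightarrow> f x = f' x"
  then have img: "f ` A m = f' ` A m" and res: "\<And>x. restrict (x \<circ> f) (A m) = restrict (x \<circ> f') (A m)"
    by (auto intro: restrict_ext)
  show ?thesis
    unfolding dot_def img by (simp only: res)
qed

lemma dot_restrict: "dot \<beta> m (restrict f (A m)) = dot \<beta> m f"
  by (rule dot_cong) simp

lemma dot_comp:
  assumes \<beta>: "\<beta> \<in> SG R A" and f: "f ` A m \<subseteq> A n" and x: "x \<in> H n"
  shows "dot \<beta> m (x \<circ> f) = push (\<lambda>y. restrict (y \<circ> f) (A m)) (H n) (H m) (dot \<beta> n x)"
proof -
  obtain N where N: "x ` A n \<subseteq> A N"
    using image_subset_A by blast
  then have xf: "(x \<circ> f) ` A m \<subseteq> A N"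
    using f by auto
  have "{z \<in> H N. restrict (z \<circ> x) (A n) \<in> {y \<in> H n. restrict (y \<circ> f) (A m) \<in> S}} =
      {z \<in> H N. restrict (z \<circ> (x \<circ> f)) (A m) \<in> S}" for S
  proof (rule Collect_mem_Collect_comp)
    show "restrict (restrict (z \<circ> x) (A n) \<circ> f) (A m) = restrict (z \<circ> (x \<circ> f)) (A m)" for z
      using restrict_restrict_comp[OF f] by (metis o_assoc)
    show "z \<in> H N \<Longrightarrow> restrict (z \<circ> x) (A n) \<in> H n" for z
      using restrict_comp_in_Hset N x Hset_iff by blast
  qed
  then show ?thesis
    unfolding dot_eq_level[OF \<beta> xf] dot_eq_level[OF \<beta> N] push_def by auto
qed

lemma ultrafilter_dot:
  assumes \<beta>: "\<beta> \<in> SG R A" and f: "is_emb R (A m) f"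
  shows "ultrafilter_on (H m) (dot \<beta> m f)"
proof -
  obtain n where n: "f ` A m \<subseteq> A n"
    using image_subset_A by blast
  then have "dot \<beta> m f = push (\<lambda>x. restrict (x \<circ> f) (A m)) (H n) (H m) (\<beta> n)"
    by (rule dot_eq_push[OF \<beta>])
  moreover have "(\<lambda>x. restrict (x \<circ> f) (A m)) ` H n \<subseteq> H m"
    using restrict_comp_in_Hset[OF _ f n] by blast
  ultimately show ?thesis
    using ultrafilter_on_push[OF SG_ultrafilter[OF \<beta>]] by metis
qed

lemma gact_in_SG:
  assumes \<beta>: "\<beta> \<in> SG R A" and g: "g \<in> Aut R"
  shows "gact R A \<beta> g \<in> SG R A"
proof -
  have "ultrafilter_on (H m) (gact R A \<beta> g m)" for m
    unfolding gact_eq_dot using ultrafilter_dot[OF \<beta> Aut_is_emb[OF g]] .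
  moreover have "gact R A \<beta> g m = push (\<lambda>f. restrict f (A m)) (H m') (H m) (gact R A \<beta> g m')"
    if mm': "m \<le> m'" for m m'
  proof -
    obtain n where n: "g ` A m' \<subseteq> A n"
      using image_subset_A by blast
    then have n': "g ` A m \<subseteq> A n"
      using A_mono[OF mm'] by auto
    have "(\<lambda>x. restrict (x \<circ> g) (A m')) ` H n \<subseteq> H m'"
      using restrict_comp_in_Hset[OF _ Aut_is_emb[OF g] n] by auto
    then have "push (\<lambda>f. restrict f (A m)) (H m') (H m) (gact R A \<beta> g m')
        = push ((\<lambda>f. restrict f (A m)) \<circ> (\<lambda>x. restrict (x \<circ> g) (A m'))) (H n) (H m) (\<beta> n)"
      unfolding gact_eq_dot dot_eq_push[OF \<beta> n] by (rule push_comp)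
    also have "\<dots> = push (\<lambda>x. restrict (x \<circ> g) (A m)) (H n) (H m) (\<beta> n)"
      using A_mono[OF mm'] by (intro push_cong) (simp add: Int_absorb1)
    also have "\<dots> = gact R A \<beta> g m"
      unfolding gact_eq_dot dot_eq_push[OF \<beta> n'] ..
    finally show ?thesis
      by simp
  qed
  ultimately show ?thesis
    unfolding SG_def by blast
qed

lemma dot_gact:
  assumes \<beta>: "\<beta> \<in> SG R A" and g: "g \<in> Aut R" and f: "f \<in> H m"
  shows "dot (gact R A \<beta> g) m f = dot \<beta> m (g \<circ> f)"
proof -
  obtain n where n: "f ` A m \<subseteq> A n"
    using image_subset_A by blast
  have "dot (gact R A \<beta> g) m f = push (\<lambda>y. restrict (y \<circ> f) (A m)) (H n) (H m) (dot \<beta> n g)"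
    by (subst dot_eq_push[OF gact_in_SG[OF \<beta> g] n]) (simp add: gact_eq_dot)
  also have "\<dots> = dot \<beta> m (restrict g (A n) \<circ> f)"
    using dot_comp[OF \<beta> n restrict_in_Hset[OF Aut_is_emb[OF g]]] by (simp add: dot_restrict)
  also have "\<dots> = dot \<beta> m (g \<circ> f)"
    using n by (intro dot_cong) auto
  finally show ?thesis .
qed

definition mult :: "(nat \<Rightarrow> (nat \<Rightarrow> nat) set set) \<Rightarrow> (nat \<Rightarrow> (nat \<Rightarrow> nat) set set) \<Rightarrow> (nat \<Rightarrow> (nat \<Rightarrow> nat) set set)" where
  "mult \<beta> \<delta> = (\<lambda>m. {S. S \<subseteq> H m \<and> {f \<in> H m. S \<in> dot \<beta> m f} \<in> \<delta> m})"

lemma mem_mult_iff: "S \<in> mult \<beta> \<delta> m \<longleftrightarrow> S \<subseteq> H m \<and> {f \<in> H m. S \<in> dot \<beta> m f} \<in> \<delta> m"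
  unfolding mult_def by simp

lemma dot_pullback:
  assumes \<beta>: "\<beta> \<in> SG R A" and mn: "m \<le> n" and h: "h \<in> H n" and S: "S \<subseteq> H m"
  shows "{y \<in> H n. restrict y (A m) \<in> S} \<in> dot \<beta> n h \<longleftrightarrow> S \<in> dot \<beta> m h"
proof -
  have "dot \<beta> m (h \<circ> id) = push (\<lambda>y. restrict (y \<circ> id) (A m)) (H n) (H m) (dot \<beta> n h)"
    using A_mono[OF mn] by (intro dot_comp[OF \<beta> _ h]) auto
  then show ?thesis
    using S by (simp add: mem_push_iff)
qed

lemma mult_in_SG:
  assumes \<beta>: "\<beta> \<in> SG R A" and \<delta>: "\<delta> \<in> SG R A"
  shows "mult \<beta> \<delta> \<in> SG R A"
proof -
  have "ultrafilter_on (H m) (mult \<beta> \<delta> m)" for m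
    unfolding mult_def
    by (rule ultrafilter_on_limit[OF SG_ultrafilter[OF \<delta>]])
      (use ultrafilter_dot[OF \<beta>] Hset_iff in blast)
  moreover have "S \<in> mult \<beta> \<delta> m \<longleftrightarrow> S \<in> push (\<lambda>f. restrict f (A m)) (H n) (H m) (mult \<beta> \<delta> n)"
    if mn: "m \<le> n" for m n S
  proof (cases "S \<subseteq> H m")
    case True
    define S' where "S' = {y \<in> H n. restrict y (A m) \<in> S}"
    have "{h \<in> H n. restrict h (A m) \<in> {f \<in> H m. S \<in> dot \<beta> m f}} = {h \<in> H n. S \<in> dot \<beta> m h}"
      using restrict_Hset_in_Hset[OF _ mn] dot_restrict by auto
    moreover have "{h \<in> H n. S' \<in> dot \<beta> n h} = {h \<in> H n. S \<in> dot \<beta> m h}"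
      unfolding S'_def using dot_pullback[OF \<beta> mn _ True] by auto
    ultimately have "S \<in> mult \<beta> \<delta> m \<longleftrightarrow> S' \<in> mult \<beta> \<delta> n"
      using SG_mem_iff_pullback[OF \<delta> mn, of "{f \<in> H m. S \<in> dot \<beta> m f}"] True
      by (auto simp: mem_mult_iff S'_def)
    then show ?thesis
      using True by (simp add: mem_push_iff S'_def)
  qed (auto simp: mem_mult_iff mem_push_iff)
  ultimately show ?thesis
    unfolding SG_def by blast
qed

lemma dot_mult:
  assumes \<beta>: "\<beta> \<in> SG R A" and \<delta>: "\<delta> \<in> SG R A" and f: "f \<in> H m"
  shows "S \<in> dot (mult \<beta> \<delta>) m f \<longleftrightarrow> S \<subseteq> H m \<and> {h \<in> H m. S \<in> dot \<beta> m h} \<in> dot \<delta> m f"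
proof (cases "S \<subseteq> H m")
  case True
  obtain n where n: "f ` A m \<subseteq> A n"
    using image_subset_A by blast
  define T where "T = {x \<in> H n. restrict (x \<circ> f) (A m) \<in> S}"
  have "{y \<in> H n. restrict (y \<circ> f) (A m) \<in> {h \<in> H m. S \<in> dot \<beta> m h}} = {y \<in> H n. S \<in> dot \<beta> m (y \<circ> f)}"
    using restrict_comp_in_Hset[OF _ _ n] f Hset_iff dot_restrict by auto
  also have "\<dots> = {y \<in> H n. T \<in> dot \<beta> n y}"
    using dot_comp[OF \<beta> n] True unfolding T_def by (auto simp: mem_push_iff)
  finally show ?thesis
    using True
    by (simp add: mem_dot_iff[OF mult_in_SG[OF \<beta> \<delta>] n] mem_dot_iff[OF \<delta> n] mem_mult_iff T_def)
qed (simp add: dot_def)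

lemma mult_gact:
  assumes u: "u \<in> SG R A" and \<beta>: "\<beta> \<in> SG R A" and g: "g \<in> Aut R"
  shows "mult u (gact R A \<beta> g) = gact R A (mult u \<beta>) g"
proof
  fix m
  have g': "restrict g (A m) \<in> H m"
    using restrict_in_Hset[OF Aut_is_emb[OF g]] .
  show "mult u (gact R A \<beta> g) m = gact R A (mult u \<beta>) g m"
    using dot_mult[OF u \<beta> g'] unfolding dot_restrict by (auto simp: gact_eq_dot mem_mult_iff)
qed

lemma mult_assoc:
  assumes "\<alpha> \<in> SG R A" "\<beta> \<in> SG R A" "\<delta> \<in> SG R A"
  shows "mult (mult \<alpha> \<beta>) \<delta> = mult \<alpha> (mult \<beta> \<delta>)"
proof
  fix m
  have "{f \<in> H m. S \<in> dot (mult \<alpha> \<beta>) m f} = {f \<in> H m. S \<subseteq> H m \<and> {h \<in> H m. S \<in> dot \<alpha> m h} \<in> dot \<beta> m f}"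
    for S
    using dot_mult[OF assms(1,2)] by auto
  then show "mult (mult \<alpha> \<beta>) \<delta> m = mult \<alpha> (mult \<beta> \<delta>) m"
    unfolding mult_def by auto
qed


abbreviation cylinder :: "nat \<Rightarrow> (nat \<Rightarrow> nat) set \<Rightarrow> (nat \<Rightarrow> (nat \<Rightarrow> nat) set set) set" where
  "cylinder n S \<equiv> {\<alpha> \<in> SG R A. S \<in> \<alpha> n}"

abbreviation cylinders :: "(nat \<Rightarrow> (nat \<Rightarrow> nat) set set) set set" where
  "cylinders \<equiv> {cylinder n S | n S. S \<subseteq> H n}"

lemma topspace_SGtop: "topspace (SGtop R A) = SG R A"
proof -
  have "SG R A \<subseteq> cylinder 0 (H 0)"
    using SG_ultrafilter ultrafilter_on_top by blast
  then have "\<Union>cylinders = SG R A"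
    by blast
  then show ?thesis
    unfolding SGtop_def by simp
qed

lemma openin_cylinder: "openin (SGtop R A) (cylinder n S)"
proof (cases "S \<subseteq> H n")
  case True
  then show ?thesis
    unfolding SGtop_def by (intro topology_generated_by_Basis) blast
next
  case False
  then have "cylinder n S = {}"
    using ultrafilter_on_subset SG_ultrafilter by blast
  then show ?thesis
    by (simp only: openin_empty)
qed

lemma cylinder_Int:
  assumes S: "S \<subseteq> H n" and T: "T \<subseteq> H k"
  shows "cylinder n S \<inter> cylinder k T \<in> cylinders"
proof -
  define N where "N = max n k"
  define S' where "S' = {x \<in> H N. restrict x (A n) \<in> S}"
  define T' where "T' = {x \<in> H N. restrict x (A k) \<in> T}"
  have "S \<in> \<alpha> n \<and> T \<in> \<alpha> k \<longleftrightarrow> S' \<inter> T' \<in> \<alpha> N" if \<alpha>: "\<alpha> \<in> SG R A" for \<alpha>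
  proof -
    have "S \<in> \<alpha> n \<longleftrightarrow> S' \<in> \<alpha> N" "T \<in> \<alpha> k \<longleftrightarrow> T' \<in> \<alpha> N"
      unfolding S'_def T'_def N_def
      using SG_mem_iff_pullback[OF \<alpha> max.cobounded1[of n k]] SG_mem_iff_pullback[OF \<alpha> max.cobounded2[of k n]] S T
      by auto
    moreover have "S' \<subseteq> H N" "T' \<subseteq> H N"
      unfolding S'_def T'_def by auto
    ultimately show ?thesis
      using ultrafilter_on_Int_iff[OF SG_ultrafilter[OF \<alpha>]] by auto
  qed
  then have "cylinder n S \<inter> cylinder k T = cylinder N (S' \<inter> T')"
    by auto
  moreover have "S' \<inter> T' \<subseteq> H N"
    unfolding S'_def by auto
  ultimately show ?thesis
    by blast
qed

lemma openin_SGtop_imp_cylinder: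
  assumes "openin (SGtop R A) U" and "\<delta> \<in> U"
  obtains n T where "T \<in> \<delta> n" "cylinder n T \<subseteq> U"
proof -
  have "generate_topology_on cylinders U"
    using assms(1) unfolding SGtop_def by (rule openin_topology_generated_by)
  then have "(arbitrary union_of (\<lambda>V. V \<in> cylinders)) U"
    by (rule generate_topology_on_coarsest[where T="arbitrary union_of (\<lambda>V. V \<in> cylinders)", rotated 2])
      (use cylinder_Int in \<open>auto intro!: istopology_base arbitrary_union_of_inc\<close>)
  then show ?thesis
    using that assms(2) unfolding arbitrary_union_of_alt by blast
qed

lemma continuous_map_into_SGtop:
  assumes "\<And>x. x \<in> topspace X \<Longrightarrow> f x \<in> SG R A"
    and "\<And>n S. S \<subseteq> H n \<Longrightarrow> openin X {x \<in> topspace X. S \<in> f x n}"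
  shows "continuous_map X (SGtop R A) f"
  unfolding continuous_map_def
proof (intro conjI allI impI)
  show "f \<in> topspace X \<rightarrow> topspace (SGtop R A)"
    using assms(1) topspace_SGtop by auto
next
  fix U
  assume "openin (SGtop R A) U"
  then have "generate_topology_on cylinders U"
    unfolding SGtop_def by (rule openin_topology_generated_by)
  then show "openin X {x \<in> topspace X. f x \<in> U}"
  proof (induction rule: generate_topology_on.induct)
    case (Int a b)
    have "{x \<in> topspace X. f x \<in> a \<inter> b} = {x \<in> topspace X. f x \<in> a} \<inter> {x \<in> topspace X. f x \<in> b}"
      by auto
    then show ?case
      using Int by auto
  next
    case (UN K)
    have "{x \<in> topspace X. f x \<in> \<Union>K} = (\<Union>k\<in>K. {x \<in> topspace X. f x \<in> k})"
      by auto
    then show ?case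
      using UN by auto
  next
    case (Basis s)
    then obtain n S where "s = cylinder n S" "S \<subseteq> H n"
      by blast
    moreover have "{x \<in> topspace X. f x \<in> cylinder n S} = {x \<in> topspace X. S \<in> f x n}"
      using assms(1) by auto
    ultimately show ?case
      using assms(2) by simp
  qed simp
qed

lemma Hausdorff_SGtop: "Hausdorff_space (SGtop R A)"
proof -
  have separate: "\<exists>U V. openin (SGtop R A) U \<and> openin (SGtop R A) V \<and> \<alpha> \<in> U \<and> \<beta> \<in> V \<and> disjnt U V"
    if \<alpha>: "\<alpha> \<in> SG R A" and \<beta>: "\<beta> \<in> SG R A" and S: "S \<in> \<alpha> n" "S \<notin> \<beta> n" for \<alpha> \<beta> n S
  proof -
    have "S \<subseteq> H n"
      using ultrafilter_on_subset[OF SG_ultrafilter[OF \<alpha>] S(1)] .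
    then have "H n - S \<in> \<beta> n" and "disjnt (cylinder n S) (cylinder n (H n - S))"
      using S(2) ultrafilter_on_Diff_iff[OF SG_ultrafilter] \<beta> by (auto simp: disjnt_def)
    then show ?thesis
      using openin_cylinder \<alpha> \<beta> S by blast
  qed
  show ?thesis
    unfolding Hausdorff_space_def topspace_SGtop
  proof (intro allI impI)
    fix \<alpha> \<beta>
    assume "\<alpha> \<in> SG R A \<and> \<beta> \<in> SG R A \<and> \<alpha> \<noteq> \<beta>"
    moreover then obtain n S where "S \<in> \<alpha> n \<and> S \<notin> \<beta> n \<or> S \<in> \<beta> n \<and> S \<notin> \<alpha> n"
      by blast
    ultimately show "\<exists>U V. openin (SGtop R A) U \<and> openin (SGtop R A) V \<and> \<alpha> \<in> U \<and> \<beta> \<in> V \<and> disjnt U V"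
      using separate[of \<alpha> \<beta>] separate[of \<beta> \<alpha>] by (metis disjnt_sym)
  qed
qed

lemma continuous_mult: "u \<in> SG R A \<Longrightarrow> continuous_map (SGtop R A) (SGtop R A) (mult u)"
proof (rule continuous_map_into_SGtop)
  fix n S
  assume "S \<subseteq> H n"
  then have "{x \<in> topspace (SGtop R A). S \<in> mult u x n} = cylinder n {f \<in> H n. S \<in> dot u n f}"
    unfolding topspace_SGtop mult_def by auto
  then show "openin (SGtop R A) {x \<in> topspace (SGtop R A). S \<in> mult u x n}"
    using openin_cylinder by simp
qed (simp add: topspace_SGtop mult_in_SG)

lemma family_of_in_SG_iff:
  "family_of p \<in> SG R A \<longleftrightarrow>
   (\<forall>n. (\<forall>S. p (n, S) \<longrightarrow> S \<subseteq> H n) \<and> p (n, H n) \<and> \<not> p (n, {})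
     \<and> (\<forall>S T. p (n, S) \<and> p (n, T) \<longrightarrow> p (n, S \<inter> T))
     \<and> (\<forall>S T. p (n, S) \<and> S \<subseteq> T \<and> T \<subseteq> H n \<longrightarrow> p (n, T))
     \<and> (\<forall>S. S \<subseteq> H n \<longrightarrow> p (n, S) \<or> p (n, H n - S)))
   \<and> (\<forall>m n S. m \<le> n \<longrightarrow> (p (m, S) \<longleftrightarrow> S \<subseteq> H m \<and> p (n, {x \<in> H n. restrict x (A m) \<in> S})))"
  unfolding SG_def ultrafilter_on_def push_def family_of_def Pow_def Collect_mono_iff mem_Collect_eq
  by (simp add: set_eq_iff)

lemma closedin_family_of_SG: "closedin Cantor_cube {p. family_of p \<in> SG R A}"
  unfolding family_of_in_SG_iff
  by (intro closedin_Collect_conj closedin_Collect_all) (rule closedin_Cantor_cube_three_coordinates)+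

lemma compact_SGtop: "compact_space (SGtop R A)"
proof -
  define C where "C = {p. family_of p \<in> SG R A}"
  have "compactin Cantor_cube C"
    unfolding C_def
    by (rule closedin_compact_space[OF _ closedin_family_of_SG])
      (simp add: compact_space_product_topology compact_space_discrete_topology)
  then have compact: "compactin (subtopology Cantor_cube C) C"
    by (simp add: compactin_subtopology)
  have cont: "continuous_map (subtopology Cantor_cube C) (SGtop R A) family_of"
  proof (rule continuous_map_into_SGtop)
    fix n S
    have "{p \<in> topspace (subtopology Cantor_cube C). S \<in> family_of p n} = {p. p (n, S)} \<inter> C"
      unfolding family_of_def by auto
    then show "openin (subtopology Cantor_cube C) {p \<in> topspace (subtopology Cantor_cube C). S \<in> family_of p n}"
      using openin_subtopology_Int[OF clopen_Cantor_cube_coordinate(1)[of "(n, S)" True]] by simp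
  qed (simp add: C_def)
  have image: "family_of ` C = SG R A"
  proof -
    have "family_of (\<lambda>(n, S). S \<in> \<beta> n) = \<beta>" for \<beta> :: "nat \<Rightarrow> (nat \<Rightarrow> nat) set set"
      unfolding family_of_def by auto
    then have "\<beta> \<in> family_of ` C" if "\<beta> \<in> SG R A" for \<beta>
      using that image_eqI[of \<beta> family_of "\<lambda>(n, S). S \<in> \<beta> n" C] unfolding C_def by simp
    then show ?thesis
      unfolding C_def by blast
  qed
  show ?thesis
    using image_compactin[OF compact cont] unfolding compact_space_def topspace_SGtop image .
qed

lemma minimal_flow_subset_SG:
  "minimal_flow (SGtop R A) (gact R A) (Aut R) M \<Longrightarrow> M \<subseteq> SG R A"
proof -
  assume M: "minimal_flow (SGtop R A) (gact R A) (Aut R) M"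
  show ?thesis
    using closedin_subset[OF minimal_flowD(2)[OF M]] by (simp add: topspace_SGtop)
qed

lemma mult_in_minimal_flow:
  assumes M: "minimal_flow (SGtop R A) (gact R A) (Aut R) M" and u: "u \<in> M" and \<beta>: "\<beta> \<in> SG R A"
  shows "mult u \<beta> \<in> M"
proof (rule ccontr)
  assume "mult u \<beta> \<notin> M"
  have uSG: "u \<in> SG R A"
    using u minimal_flow_subset_SG[OF M] by blast
  have "openin (SGtop R A) (SG R A - M)"
    using minimal_flowD(2)[OF M] by (simp add: closedin_def topspace_SGtop)
  moreover have "mult u \<beta> \<in> SG R A - M"
    using \<open>mult u \<beta> \<notin> M\<close> mult_in_SG[OF uSG \<beta>] by blast
  ultimately obtain n T where T: "T \<in> mult u \<beta> n" "cylinder n T \<subseteq> SG R A - M"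
    by (rule openin_SGtop_imp_cylinder)
  then have "{f \<in> H n. T \<in> dot u n f} \<in> \<beta> n"
    by (simp add: mem_mult_iff)
  then have "{f \<in> H n. T \<in> dot u n f} \<noteq> {}"
    by (rule ultrafilter_on_nonempty[OF SG_ultrafilter[OF \<beta>]])
  then obtain f where f: "f \<in> H n" "T \<in> dot u n f"
    by blast
  obtain g where g: "g \<in> Aut R" "\<forall>x\<in>A n. g x = f x"
    using Hset_extends_to_Aut[OF f(1)] by blast
  then have "gact R A u g n = dot u n f"
    unfolding gact_eq_dot by (intro dot_cong) auto
  then have "gact R A u g \<in> cylinder n T"
    using f(2) gact_in_SG[OF uSG g(1)] by (simp only: mem_Collect_eq)
  moreover have "gact R A u g \<in> M"
    using minimal_flowD(3)[OF M u g(1)] .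
  ultimately show False
    using T(2) by (auto simp only: subset_iff Diff_iff)
qed

lemma idempotent_fixes_minimal_flow:
  assumes M: "minimal_flow (SGtop R A) (gact R A) (Aut R) M"
    and u: "u \<in> M" "mult u u = u" and \<beta>: "\<beta> \<in> M"
  shows "mult u \<beta> = \<beta>"
proof -
  have MSG: "M \<subseteq> SG R A"
    using minimal_flow_subset_SG[OF M] .
  then have uSG: "u \<in> SG R A"
    using u by blast
  define Z where "Z = {\<beta> \<in> M. mult u \<beta> = \<beta>}"
  have "closedin (SGtop R A) {x \<in> topspace (SGtop R A). mult u x = id x}"
    by (rule closedin_continuous_maps_eq[OF Hausdorff_SGtop continuous_mult[OF uSG] continuous_map_id])
  moreover have "Z = M \<inter> {x \<in> topspace (SGtop R A). mult u x = id x}"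
    unfolding Z_def topspace_SGtop using MSG by auto
  ultimately have "closedin (SGtop R A) Z"
    using minimal_flowD(2)[OF M] by (simp add: closedin_Int)
  moreover have "gact R A z g \<in> Z" if "z \<in> Z" "g \<in> Aut R" for z g
  proof -
    have "mult u (gact R A z g) = gact R A (mult u z) g"
      using that MSG by (intro mult_gact[OF uSG]) (auto simp: Z_def)
    then show ?thesis
      using that minimal_flowD(3)[OF M] unfolding Z_def by auto
  qed
  moreover have "u \<in> Z"
    unfolding Z_def using u by blast
  ultimately have "Z = M"
    by (intro minimal_flowD(4)[OF M]) (auto simp: Z_def)
  then show ?thesis
    using \<beta> unfolding Z_def by blast
qed

lemma retraction_mult_idempotent:
  assumes M: "minimal_flow (SGtop R A) (gact R A) (Aut R) M" and u: "u \<in> M" "mult u u = u"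
  shows "retraction R A M (mult u)"
proof -
  have uSG: "u \<in> SG R A"
    using u minimal_flow_subset_SG[OF M] by blast
  show ?thesis
    unfolding retraction_def
    using continuous_mult[OF uSG] mult_in_minimal_flow[OF M u(1)] mult_gact[OF uSG]
      idempotent_fixes_minimal_flow[OF M u]
    by auto
qed


definition pattern :: "nat \<Rightarrow> (nat \<Rightarrow> nat) set \<Rightarrow> (nat \<Rightarrow> (nat \<Rightarrow> nat) set set) \<Rightarrow> ((nat \<Rightarrow> nat) \<Rightarrow> bool)" where
  "pattern m S \<beta> = restrict (\<lambda>f. S \<in> dot \<beta> m f) (H m)"

lemma pattern_eq_chi_iff: "pattern m S \<beta> = chi R A m S \<longleftrightarrow> (\<forall>f\<in>H m. S \<in> dot \<beta> m f \<longleftrightarrow> f \<in> S)"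
  unfolding pattern_def chi_def by (auto simp: fun_eq_iff restrict_def)

lemma continuous_pattern:
  assumes S: "S \<subseteq> H m"
  shows "continuous_map (SGtop R A) (cube_top R A m) (pattern m S)"
  unfolding cube_top_def continuous_map_componentwise
proof (intro conjI ballI)
  show "pattern m S ` topspace (SGtop R A) \<subseteq> extensional (H m)"
    unfolding pattern_def by auto
next
  fix f
  assume f: "f \<in> H m"
  obtain n where n: "f ` A m \<subseteq> A n"
    using image_subset_A by blast
  define T where "T = {x \<in> H n. restrict (x \<circ> f) (A m) \<in> S}"
  have T: "T \<subseteq> H n"
    unfolding T_def by auto
  have "pattern m S \<beta> f \<longleftrightarrow> T \<in> \<beta> n" if "\<beta> \<in> SG R A" for \<beta>
    unfolding pattern_def T_def using f mem_dot_iff[OF that n] S by auto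
  then have "{\<beta> \<in> topspace (SGtop R A). pattern m S \<beta> f} = cylinder n T"
    and "{\<beta> \<in> topspace (SGtop R A). \<not> pattern m S \<beta> f} = cylinder n (H n - T)"
    using ultrafilter_on_Diff_iff[OF SG_ultrafilter T] by (auto simp: topspace_SGtop)
  then show "continuous_map (SGtop R A) (discrete_topology UNIV) (\<lambda>\<beta>. pattern m S \<beta> f)"
    by (intro continuous_map_to_discrete_bool) (simp_all add: openin_cylinder)
qed

lemma pattern_gact:
  assumes \<beta>: "\<beta> \<in> SG R A" and g: "g \<in> Aut R"
  shows "cact R A m (pattern m S \<beta>) g = pattern m S (gact R A \<beta> g)"
  unfolding cact_def pattern_def
proof (rule restrict_ext)
  fix f
  assume f: "f \<in> H m"
  then have "restrict (\<lambda>f. S \<in> dot \<beta> m f) (H m) (restrict (g \<circ> f) (A m)) = (S \<in> dot \<beta> m (g \<circ> f))"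
    using restrict_Aut_comp_in_Hset[OF g f] by (simp add: dot_restrict)
  also have "\<dots> = (S \<in> dot (gact R A \<beta> g) m f)"
    using dot_gact[OF \<beta> g f] by simp
  finally show "restrict (\<lambda>f. S \<in> dot \<beta> m f) (H m) (restrict (g \<circ> f) (A m)) = (S \<in> dot (gact R A \<beta> g) m f)" .
qed

text \<open>On finitely many coordinates, the pattern of \<open>\<beta>\<close> is realised by a translate of \<open>S\<close>: the
  condition holds for \<open>\<beta>(n)\<close>-almost every \<open>x \<in> H n\<close>, and such an \<open>x\<close> extends to an automorphism.\<close>

lemma exists_Aut_realising_pattern:
  assumes S: "S \<subseteq> H m" and \<beta>: "\<beta> \<in> SG R A" and F: "finite F" "F \<subseteq> H m"
  obtains g where "g \<in> Aut R" "\<And>f. f \<in> F \<Longrightarrow> restrict (g \<circ> f) (A m) \<in> S \<longleftrightarrow> S \<in> dot \<beta> m f"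
proof -
  obtain n where n: "\<forall>f\<in>F. f ` A m \<subseteq> A n"
    using finite_image_subset_A[OF F(1)] by blast
  have "{x \<in> H n. restrict (x \<circ> f) (A m) \<in> S \<longleftrightarrow> S \<in> dot \<beta> m f} \<in> \<beta> n" if f: "f \<in> F" for f
  proof -
    define P where "P = {x \<in> H n. restrict (x \<circ> f) (A m) \<in> S}"
    have "S \<in> dot \<beta> m f \<longleftrightarrow> P \<in> \<beta> n"
      using mem_dot_iff[OF \<beta>] n f S unfolding P_def by blast
    moreover have "P \<subseteq> H n"
      unfolding P_def by auto
    moreover have "{x \<in> H n. restrict (x \<circ> f) (A m) \<in> S \<longleftrightarrow> S \<in> dot \<beta> m f} =
        (if S \<in> dot \<beta> m f then P else H n - P)"
      unfolding P_def by auto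
    ultimately show ?thesis
      using ultrafilter_on_Diff_iff[OF SG_ultrafilter[OF \<beta>]] by simp
  qed
  then have "{x \<in> H n. \<forall>f\<in>F. restrict (x \<circ> f) (A m) \<in> S \<longleftrightarrow> S \<in> dot \<beta> m f} \<in> \<beta> n"
    by (rule ultrafilter_on_finite_Ball[OF SG_ultrafilter[OF \<beta>] F(1)])
  then obtain x where x: "x \<in> H n" "\<forall>f\<in>F. restrict (x \<circ> f) (A m) \<in> S \<longleftrightarrow> S \<in> dot \<beta> m f"
    using ultrafilter_on_nonempty[OF SG_ultrafilter[OF \<beta>]] by blast
  obtain g where g: "g \<in> Aut R" "\<forall>y\<in>A n. g y = x y"
    using Hset_extends_to_Aut[OF x(1)] by blast
  have "restrict (g \<circ> f) (A m) = restrict (x \<circ> f) (A m)" if "f \<in> F" for f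
    using g(2) n that by (intro restrict_ext) auto
  then show ?thesis
    using that g(1) x(2) by auto
qed

lemma pattern_in_orbit_closure:
  assumes S: "S \<subseteq> H m" and \<beta>: "\<beta> \<in> SG R A"
  shows "pattern m S \<beta> \<in> cube_top R A m closure_of ((\<lambda>g. cact R A m (chi R A m S) g) ` Aut R)"
  unfolding in_closure_of
proof (intro conjI allI impI)
  show "pattern m S \<beta> \<in> topspace (cube_top R A m)"
    unfolding cube_top_def pattern_def by simp
next
  fix W
  assume "pattern m S \<beta> \<in> W \<and> openin (cube_top R A m) W"
  then obtain U where U: "finite {f \<in> H m. U f \<noteq> UNIV}" "pattern m S \<beta> \<in> Pi\<^sub>E (H m) U" "Pi\<^sub>E (H m) U \<subseteq> W"
    unfolding cube_top_def openin_product_topology_alt by auto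
  obtain g where g: "g \<in> Aut R"
    and realise: "\<And>f. f \<in> {f \<in> H m. U f \<noteq> UNIV} \<Longrightarrow> restrict (g \<circ> f) (A m) \<in> S \<longleftrightarrow> S \<in> dot \<beta> m f"
    using exists_Aut_realising_pattern[OF S \<beta> U(1)] by blast
  have "cact R A m (chi R A m S) g f \<in> U f" if f: "f \<in> H m" for f
  proof (cases "U f = UNIV")
    case False
    then have "cact R A m (chi R A m S) g f = pattern m S \<beta> f"
      using f realise restrict_Aut_comp_in_Hset[OF g f] by (simp add: cact_def chi_def pattern_def)
    then show ?thesis
      using U(2) f by (auto simp: PiE_iff)
  qed simp
  then have "cact R A m (chi R A m S) g \<in> Pi\<^sub>E (H m) U"
    by (simp add: PiE_iff cact_def)
  then show "\<exists>y. y \<in> (\<lambda>g. cact R A m (chi R A m S) g) ` Aut R \<and> y \<in> W"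
    using U(3) g by blast
qed

lemma chi_in_orbit_closure:
  "chi R A m S \<in> cube_top R A m closure_of ((\<lambda>g. cact R A m (chi R A m S) g) ` Aut R)"
proof -
  have "chi R A m S = cact R A m (chi R A m S) id"
    unfolding cact_def chi_def by (auto simp: fun_eq_iff restrict_Hset)
  moreover have "(\<lambda>g. cact R A m (chi R A m S) g) ` Aut R \<subseteq> topspace (cube_top R A m)"
    unfolding cube_top_def cact_def by auto
  ultimately show ?thesis
    using closure_of_subset id_in_Aut by blast
qed

text \<open>By minimality of the orbit closure of \<open>\<chi>_S\<close>, the image of \<open>M\<close> under the pattern map is
  all of it, and in particular contains \<open>\<chi>_S\<close>.\<close>

lemma exists_pattern_eq_chi:
  assumes M: "minimal_flow (SGtop R A) (gact R A) (Aut R) M" and S: "minimal_set R A m S"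
  obtains w where "w \<in> M" "pattern m S w = chi R A m S"
proof -
  have SH: "S \<subseteq> H m"
    and X: "minimal_flow (cube_top R A m) (cact R A m) (Aut R)
       (cube_top R A m closure_of ((\<lambda>g. cact R A m (chi R A m S) g) ` Aut R))"
    using S unfolding minimal_set_def by auto
  have MSG: "M \<subseteq> SG R A"
    using minimal_flow_subset_SG[OF M] .
  have "compactin (SGtop R A) M"
    by (rule closedin_compact_space[OF compact_SGtop minimal_flowD(2)[OF M]])
  then have "compactin (cube_top R A m) (pattern m S ` M)"
    by (rule image_compactin[OF _ continuous_pattern[OF SH]])
  then have "closedin (cube_top R A m) (pattern m S ` M)"
    by (rule compactin_imp_closedin[rotated]) (simp add: cube_top_def Hausdorff_space_product_topology)
  moreover have "cact R A m (pattern m S w) g \<in> pattern m S ` M" if "w \<in> M" "g \<in> Aut R" for w g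
    using that pattern_gact[of w g] MSG minimal_flowD(3)[OF M] by (simp add: subset_iff)
  ultimately have "pattern m S ` M = cube_top R A m closure_of ((\<lambda>g. cact R A m (chi R A m S) g) ` Aut R)"
    using minimal_flowD(1)[OF M] pattern_in_orbit_closure[OF SH] MSG
    by (intro minimal_flowD(4)[OF X]) auto
  then have "chi R A m S \<in> pattern m S ` M"
    using chi_in_orbit_closure by simp
  then obtain w where "w \<in> M" "chi R A m S = pattern m S w"
    by (rule imageE)
  then show ?thesis
    using that by simp
qed

lemma closedin_pattern_eq_chi:
  assumes S: "S \<subseteq> H m"
  shows "closedin (SGtop R A) {w \<in> SG R A. pattern m S w = chi R A m S}"
proof -
  have "chi R A m S \<in> topspace (cube_top R A m)"
    unfolding cube_top_def chi_def by simp
  then have "closedin (cube_top R A m) {chi R A m S}"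
    by (intro closedin_Hausdorff_singleton) (simp_all add: cube_top_def Hausdorff_space_product_topology)
  from closedin_continuous_map_preimage[OF continuous_pattern[OF S] this]
  show ?thesis
    by (simp add: topspace_SGtop)
qed

lemma pattern_mult_eq_chi:
  assumes S: "S \<subseteq> H m" and \<beta>: "\<beta> \<in> SG R A" "pattern m S \<beta> = chi R A m S"
    and \<delta>: "\<delta> \<in> SG R A" "pattern m S \<delta> = chi R A m S"
  shows "pattern m S (mult \<beta> \<delta>) = chi R A m S"
proof -
  have "{h \<in> H m. S \<in> dot \<beta> m h} = S"
    using \<beta>(2) S unfolding pattern_eq_chi_iff by auto
  then show ?thesis
    using \<delta>(2) S dot_mult[OF \<beta>(1) \<delta>(1)] unfolding pattern_eq_chi_iff by simp
qed

lemma exists_idempotent_pattern_eq_chi: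
  assumes M: "minimal_flow (SGtop R A) (gact R A) (Aut R) M" and S: "minimal_set R A m S"
  obtains u where "u \<in> M" "mult u u = u" "pattern m S u = chi R A m S"
proof -
  define K where "K = {w \<in> M. pattern m S w = chi R A m S}"
  have SH: "S \<subseteq> H m"
    using S unfolding minimal_set_def by blast
  have MSG: "M \<subseteq> SG R A"
    using minimal_flow_subset_SG[OF M] .
  have "K = M \<inter> {w \<in> SG R A. pattern m S w = chi R A m S}"
    unfolding K_def using MSG by blast
  then have "closedin (SGtop R A) K"
    using minimal_flowD(2)[OF M] closedin_pattern_eq_chi[OF SH] by (simp add: closedin_Int)
  moreover have "K \<noteq> {}"
    using exists_pattern_eq_chi[OF M S] unfolding K_def by blast
  moreover have "mult x y \<in> K" if "x \<in> K" "y \<in> K" for x y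
  proof -
    have "x \<in> SG R A" "y \<in> SG R A"
      using that MSG unfolding K_def by auto
    then show ?thesis
      using that mult_in_minimal_flow[OF M] pattern_mult_eq_chi[OF SH] unfolding K_def by simp
  qed
  ultimately have K_semigroup: "closed_subsemigroup (SGtop R A) mult K"
    unfolding closed_subsemigroup_def by blast
  have KSG: "K \<subseteq> SG R A"
    unfolding K_def using MSG by blast
  obtain u where "u \<in> K" "mult u u = u"
  proof (rule Ellis_Numakura[OF compact_SGtop Hausdorff_SGtop K_semigroup])
    show "mult (mult x y) z = mult x (mult y z)" if "x \<in> K" "y \<in> K" "z \<in> K" for x y z
      by (rule mult_assoc) (use that KSG in auto)
    show "continuous_map (SGtop R A) (SGtop R A) (mult x)" if "x \<in> K" for x
      by (rule continuous_mult) (use that KSG in auto)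
  qed
  then show ?thesis
    using that unfolding K_def by blast
qed

lemma mem_mult_iff_of_pattern_eq_chi:
  assumes "S \<subseteq> H m" and "pattern m S u = chi R A m S"
  shows "S \<in> mult u \<beta> m \<longleftrightarrow> S \<in> \<beta> m"
proof -
  have "{f \<in> H m. S \<in> dot u m f} = S"
    using assms unfolding pattern_eq_chi_iff by auto
  then show ?thesis
    using assms(1) by (simp add: mem_mult_iff)
qed

end

theorem mainTheorem16:
  fixes ar :: "'r \<Rightarrow> nat" and R :: "'r \<Rightarrow> nat list \<Rightarrow> bool"
    and A :: "nat \<Rightarrow> nat set"
    and M :: "(nat \<Rightarrow> (nat \<Rightarrow> nat) set set) set"
    and \<alpha> \<gamma> :: "nat \<Rightarrow> (nat \<Rightarrow> nat) set set"
    and m :: nat and S :: "(nat \<Rightarrow> nat) set"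
  assumes arity: "\<And>r xs. R r xs \<Longrightarrow> length xs = ar r"
    and uh: "ultrahomogeneous R"
    and chain: "\<And>n. A n \<subseteq> A (Suc n)"
    and fin: "\<And>n. finite (A n)"
    and card: "\<And>n. card (A n) = n"
    and exh: "(\<Union>n. A n) = UNIV"
    and M: "minimal_flow (SGtop R A) (gact R A) (Aut R) M"
    and \<alpha>: "\<alpha> \<in> SG R A" and \<gamma>: "\<gamma> \<in> SG R A"
    and ret: "\<And>\<phi>. retraction R A M \<phi> \<Longrightarrow> \<phi> \<alpha> = \<phi> \<gamma>"
    and S: "minimal_set R A m S"
  shows "S \<in> \<alpha> m \<longleftrightarrow> S \<in> \<gamma> m"
proof -
  interpret fraisse_exhaustion R A
    using uh chain fin exh by unfold_locales
  obtain u where u: "u \<in> M" "mult u u = u" and pat: "pattern m S u = chi R A m S"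
    using exists_idempotent_pattern_eq_chi[OF M S] by blast
  have "S \<subseteq> Hset R A m"
    using S unfolding minimal_set_def by blast
  then have "S \<in> \<beta> m \<longleftrightarrow> S \<in> mult u \<beta> m" for \<beta>
    using mem_mult_iff_of_pattern_eq_chi[OF _ pat] by simp
  moreover have "mult u \<alpha> = mult u \<gamma>"
    by (rule ret[OF retraction_mult_idempotent[OF M u]])
  ultimately show ?thesis
    by (metis (no_types))
qed

end
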